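(* Let $K$ be a commutative ring of characteristic $0$ with unit and $M$ a multiplicative $\mathbb{R}$-vector subspace of $\mathcal{H}^{>0}$. Let $F_\nu\in K((M))$ be nonzero for $\nu\in\mathbb{N}$, assume that each $F_\nu$ has $M$-natural support and that the sequence $(\operatorname{lm}(F_\nu):\nu\in\mathbb{N})$ is decreasing and coinitial in $M$. Then $\sum_\nu F_\nu$ has $M$-natural support.
   Context: $\mathcal{H}$ is the Hardy field of germs at $+\infty$ of unary functions definable in $\mathbb{R}_{\mathrm{an},\exp}$, totally ordered by eventual comparison. $K((M))$ is the ring of formal series $\sum_{m\in M}a_mm$, $a_m\in K$, with anti-well-ordered support; $\operatorname{lm}(F)$ is the largest element of the support of nonzero $F$. A set $S\subseteq M$ is $M$-natural if $S\cap(a,+\infty)$ is finite for all $a\in M$; a series has $M$-natural support if its support is $M$-natural. Coinitial in $M$ means: for every $m\in M$ some term of the sequence is $\le m$. Under the hypotheses, the infinite sum $\sum_\nu F_\nu$ is defined coefficientwise and is an element of $K((M))$. *)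

theory Defs
  imports Main
begin

text \<open>The monomial group M is modelled abstractly by a linearly ordered type 'm
  (all elements of the type are the monomials). A formal series in K((M)) is a
  coefficient function 'm \<Rightarrow> 'k whose support is anti-well-ordered.\<close>

definition supp :: "('m \<Rightarrow> 'k::zero) \<Rightarrow> 'm set" where
  "supp F = {m. F m \<noteq> 0}"

definition anti_well_ordered :: "'m::linorder set \<Rightarrow> bool" where
  "anti_well_ordered S \<longleftrightarrow> (\<forall>A. A \<subseteq> S \<longrightarrow> A \<noteq> {} \<longrightarrow> (\<exists>m\<in>A. \<forall>x\<in>A. x \<le> m))"

definition hahn_series :: "('m::linorder \<Rightarrow> 'k::zero) \<Rightarrow> bool" where
  "hahn_series F \<longleftrightarrow> anti_well_ordered (supp F)"

definition lm :: "('m::linorder \<Rightarrow> 'k::zero) \<Rightarrow> 'm" where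
  "lm F = (GREATEST m. m \<in> supp F)"

definition M_natural :: "'m::linorder set \<Rightarrow> bool" where
  "M_natural S \<longleftrightarrow> (\<forall>a. finite (S \<inter> {a<..}))"

definition coinitial :: "(nat \<Rightarrow> 'm::linorder) \<Rightarrow> bool" where
  "coinitial g \<longleftrightarrow> (\<forall>m. \<exists>\<nu>. g \<nu> \<le> m)"

definition series_sum :: "(nat \<Rightarrow> 'm \<Rightarrow> 'k::comm_monoid_add) \<Rightarrow> 'm \<Rightarrow> 'k" where
  "series_sum F = (\<lambda>m. \<Sum>\<nu>\<in>{\<nu>. F \<nu> m \<noteq> 0}. F \<nu> m)"

end

theory Submission
  imports Defs
begin

text \<open>Every monomial of the sum occurs in some summand. Choose \<open>n\<close> with \<open>lm (F n) \<le> a\<close> by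
  coinitiality; since the leading monomials decrease, no summand from index \<open>n\<close> on has
  a monomial above \<open>a\<close>, so the monomials of the sum above \<open>a\<close> lie in the finitely many
  finite sets \<open>supp (F k) \<inter> {a<..}\<close>, \<open>k < n\<close>.\<close>

lemma supp_le_lm:
  assumes "hahn_series G" and "m \<in> supp G"
  shows "m \<le> lm G"
proof -
  obtain g where g: "g \<in> supp G" "\<forall>x\<in>supp G. x \<le> g"
    using assms unfolding hahn_series_def anti_well_ordered_def by blast
  then have "lm G = g"
    unfolding lm_def by (intro Greatest_equality) auto
  with g assms(2) show ?thesis by simp
qed

lemma supp_above_lm_empty:
  assumes "hahn_series G" and "lm G \<le> a"
  shows "supp G \<inter> {a<..} = {}"
  using supp_le_lm[OF assms(1)] assms(2) by fastforce

lemma supp_series_sum_subset: "supp (series_sum F) \<subseteq> (\<Union>\<nu>. supp (F \<nu>))"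
proof
  fix m assume "m \<in> supp (series_sum F)"
  then have "series_sum F m \<noteq> 0"
    by (simp add: supp_def)
  then obtain \<nu> where "F \<nu> m \<noteq> 0"
    unfolding series_sum_def by (metis (mono_tags, lifting) empty_Collect_eq sum.empty)
  then show "m \<in> (\<Union>\<nu>. supp (F \<nu>))"
    by (auto simp: supp_def)
qed

lemma M_natural_subset: "M_natural T \<Longrightarrow> S \<subseteq> T \<Longrightarrow> M_natural S"
  unfolding M_natural_def by (meson Int_mono finite_subset order_refl)

lemma M_natural_UN_eventually_below:
  fixes S :: "nat \<Rightarrow> 'm::linorder set"
  assumes "\<And>k. M_natural (S k)"
    and "\<And>a. \<exists>n. \<forall>k\<ge>n. S k \<inter> {a<..} = {}"
  shows "M_natural (\<Union>k. S k)"
  unfolding M_natural_def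
proof
  fix a
  obtain n where n: "\<forall>k\<ge>n. S k \<inter> {a<..} = {}"
    using assms(2) by blast
  have "(\<Union>k. S k) \<inter> {a<..} \<subseteq> (\<Union>k<n. S k \<inter> {a<..})"
  proof
    fix x assume "x \<in> (\<Union>k. S k) \<inter> {a<..}"
    then obtain k where x: "x \<in> S k \<inter> {a<..}" by blast
    have "k < n"
    proof (rule ccontr)
      assume "\<not> k < n"
      with n have "S k \<inter> {a<..} = {}" by simp
      with x show False by blast
    qed
    with x show "x \<in> (\<Union>k<n. S k \<inter> {a<..})" by blast
  qed
  moreover have "finite (\<Union>k<n. S k \<inter> {a<..})"
    using assms(1) unfolding M_natural_def by blast
  ultimately show "finite ((\<Union>k. S k) \<inter> {a<..})"
    by (rule finite_subset)
qed

theorem lemma5p6: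
  fixes F :: "nat \<Rightarrow> 'm::linorder \<Rightarrow> 'k::{comm_ring_1, ring_char_0}"
  assumes series: "\<And>\<nu>. hahn_series (F \<nu>)"
    and nonzero: "\<And>\<nu>. F \<nu> \<noteq> (\<lambda>_. 0)"
    and natural: "\<And>\<nu>. M_natural (supp (F \<nu>))"
    and decr: "\<And>\<nu>. lm (F (Suc \<nu>)) \<le> lm (F \<nu>)"
    and coin: "coinitial (\<lambda>\<nu>. lm (F \<nu>))"
  shows "M_natural (supp (series_sum F))"
proof -
  have "\<exists>n. \<forall>k\<ge>n. supp (F k) \<inter> {a<..} = {}" for a
  proof -
    obtain n where n: "lm (F n) \<le> a"
      using coin unfolding coinitial_def by blast
    have "supp (F k) \<inter> {a<..} = {}" if "n \<le> k" for k
    proof -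
      have "lm (F k) \<le> lm (F n)"
        using decr that by (rule lift_Suc_antimono_le)
      with n show ?thesis
        using series by (intro supp_above_lm_empty) auto
    qed
    then show ?thesis by blast
  qed
  with natural have "M_natural (\<Union>\<nu>. supp (F \<nu>))"
    by (rule M_natural_UN_eventually_below)
  then show ?thesis
    using supp_series_sum_subset by (rule M_natural_subset)
qed

end
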